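(* Fix $b>0$ and $\Delta>0$. For each $\sigma_\theta^2>0$, let $a^\dagger(\sigma_\theta^2)$ be the unique maximizer over $a<\frac{4b^2\Delta}{\sigma_\theta^2}$ of $$E_1(a)=\begin{cases}\dfrac{b-\sqrt{\tfrac{b^2-\Delta a+\sqrt{(b^2-\Delta a)^2+\sigma_\theta^2a^2}}{2}}}{a}, & a\neq0,\\[1ex] \dfrac{\Delta}{2b}, & a=0.\end{cases}$$ Then there exist unique thresholds $0<\sigma_1^2<\Delta^2<\sigma_2^2$ such that $a^\dagger$ is increasing in $\sigma_\theta^2$ on $(0,\sigma_1^2)$, decreasing on $(\sigma_1^2,\sigma_2^2)$, and increasing on $(\sigma_2^2,\infty)$. Moreover, $\lim_{\sigma_\theta^2\downarrow0}a^\dagger=\frac{b^2}{\Delta}$ and $a^\dagger\to0$ from below as $\sigma_\theta^2\to\infty$. *)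

theory Defs
  imports "HOL-Analysis.Analysis"
begin

text \<open>E_1(a) for parameters b, Delta and variance s = sigma_theta^2.\<close>
definition E1 :: "real \<Rightarrow> real \<Rightarrow> real \<Rightarrow> real \<Rightarrow> real" where
  "E1 b \<Delta> s a =
     (if a = 0 then \<Delta> / (2 * b)
      else (b - sqrt ((b\<^sup>2 - \<Delta> * a + sqrt ((b\<^sup>2 - \<Delta> * a)\<^sup>2 + s * a\<^sup>2)) / 2)) / a)"

definition is_max_E1 :: "real \<Rightarrow> real \<Rightarrow> real \<Rightarrow> real \<Rightarrow> bool" where
  "is_max_E1 b \<Delta> s a \<longleftrightarrow>
     a < 4 * b\<^sup>2 * \<Delta> / s \<and> (\<forall>a'. a' < 4 * b\<^sup>2 * \<Delta> / s \<longrightarrow> E1 b \<Delta> s a' \<le> E1 b \<Delta> s a)"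

definition adagger :: "real \<Rightarrow> real \<Rightarrow> real \<Rightarrow> real" where
  "adagger b \<Delta> s = (THE a. is_max_E1 b \<Delta> s a)"

end

(*
  The substitution a = (b^2 / Delta) x, s = Delta^2 t turns E1 b Delta s into a positive multiple
  of E1 1 1 t, so it suffices to treat b = Delta = 1.

  The normalized problem is solved through a parameter z in (zlow, 1), zlow = (1 - sqrt 5) / 2:
  for t = var_of z the maximum of E1 1 1 t is 1 / mz z, attained exactly at argmax_of z = z * mz z.
  The reason is a factorization of the quartic that measures the gap 1 / mz z - E1 1 1 t x, in which
  argmax_of z appears as a double root.

  Since var_of decreases from +infinity to 0 on (zlow, 1), the maximizer is
  (b^2 / Delta) argmax_of (z_of_var (s / Delta^2)) with z_of_var the inverse of var_of. The sign of
  the derivative of argmax_of is that of -crit for a cubic crit with exactly two roots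
  crit_lo < 0 < crit_hi in (zlow, 1); hence the turning points Delta^2 var_of crit_hi < Delta^2 <
  Delta^2 var_of crit_lo. As s tends to 0 resp. infinity, z_of_var tends to 1 resp. zlow, where
  argmax_of takes the values 1 resp. 0.
*)

theory Submission
  imports Defs
begin

section \<open>Elementary real analysis\<close>

lemma larger_quadratic_root:
  fixes u w Y :: real
  assumes "w > 0"
  defines "P \<equiv> (u + sqrt (u\<^sup>2 + w)) / 2"
  shows "P > 0" "P - u > 0" "Y * (Y - u) - w / 4 = (Y - P) * (Y + P - u)"
proof -
  have "sqrt (u\<^sup>2) < sqrt (u\<^sup>2 + w)"
    using assms(1) by (intro real_sqrt_less_mono) simp
  then show "P > 0" "P - u > 0"
    unfolding P_def by auto
  have "(sqrt (u\<^sup>2 + w))\<^sup>2 = u\<^sup>2 + w"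
    using assms(1) by simp
  then show "Y * (Y - u) - w / 4 = (Y - P) * (Y + P - u)"
    unfolding P_def by (simp add: field_simps power2_eq_square)
qed

lemma IVT_strict:
  fixes f :: "real \<Rightarrow> real"
  assumes "a \<le> b" "continuous_on {a..b} f" "f a < 0" "0 < f b"
  shows "\<exists>x. a < x \<and> x < b \<and> f x = 0"
proof -
  obtain x where "a \<le> x" "x \<le> b" "f x = 0"
    using IVT'[of f a 0 b] assms by force
  moreover have "x \<noteq> a" "x \<noteq> b"
    using assms \<open>f x = 0\<close> by auto
  ultimately show ?thesis
    by force
qed

lemma strict_mono_on_if_deriv_pos:
  fixes f f' :: "real \<Rightarrow> real"
  assumes "\<And>x. a < x \<Longrightarrow> x < b \<Longrightarrow> (f has_real_derivative f' x) (at x)"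
    and "\<And>x. a < x \<Longrightarrow> x < b \<Longrightarrow> f' x > 0"
  shows "strict_mono_on {a<..<b} f"
proof (rule monotone_onI)
  fix x y assume xy: "x \<in> {a<..<b}" "y \<in> {a<..<b}" "x < y"
  show "f x < f y"
  proof (rule DERIV_pos_imp_increasing[OF \<open>x < y\<close>])
    fix w assume "x \<le> w" "w \<le> y"
    then show "\<exists>d. (f has_real_derivative d) (at w) \<and> d > 0"
      using xy assms[of w] by auto
  qed
qed

lemma strict_antimono_on_if_deriv_neg:
  fixes f f' :: "real \<Rightarrow> real"
  assumes "\<And>x. a < x \<Longrightarrow> x < b \<Longrightarrow> (f has_real_derivative f' x) (at x)"
    and "\<And>x. a < x \<Longrightarrow> x < b \<Longrightarrow> f' x < 0"
  shows "strict_antimono_on {a<..<b} f"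
proof (rule monotone_onI)
  fix x y assume xy: "x \<in> {a<..<b}" "y \<in> {a<..<b}" "x < y"
  show "f y < f x"
  proof (rule DERIV_neg_imp_decreasing[OF \<open>x < y\<close>])
    fix w assume "x \<le> w" "w \<le> y"
    then show "\<exists>d. (f has_real_derivative d) (at w) \<and> d < 0"
      using xy assms[of w] by auto
  qed
qed

lemma strict_antimono_on_less_iff:
  fixes f :: "real \<Rightarrow> real"
  assumes "strict_antimono_on S f" "x \<in> S" "y \<in> S"
  shows "f x < f y \<longleftrightarrow> y < x"
  using assms by (metis linorder_cases monotone_onD order.asym)

lemma not_strict_mono_and_antimono_on:
  fixes f :: "real \<Rightarrow> real"
  assumes "l < h" "strict_mono_on {l<..<h} f" "strict_antimono_on {l<..<h} f"
  shows False
proof -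
  define x y where "x = (2 * l + h) / 3" and "y = (l + 2 * h) / 3"
  have "x \<in> {l<..<h}" "y \<in> {l<..<h}" "x < y"
    unfolding x_def y_def using assms(1) by simp_all
  then have "f x < f y" "f y < f x"
    using monotone_onD[OF assms(2)] monotone_onD[OF assms(3)] by blast+
  then show False
    by simp
qed

lemma ex1_turning_points:
  fixes f :: "real \<Rightarrow> real"
  assumes "0 < s1" "s1 < c" "c < s2" "strict_mono_on {0<..<s1} f" "strict_antimono_on {s1<..<s2} f"
    "strict_mono_on {s2<..} f"
  shows "\<exists>!(x1, x2). 0 < x1 \<and> x1 < c \<and> c < x2 \<and> strict_mono_on {0<..<x1} f
    \<and> strict_antimono_on {x1<..<x2} f \<and> strict_mono_on {x2<..} f"
proof (rule ex1I[of _ "(s1, s2)"])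
  have inc_ends_before_dec: "a \<le> x" if "strict_mono_on {0<..<a} f" "strict_antimono_on {x<..<y} f" "0 < x" "x < y"
    for a x y
  proof (rule ccontr)
    assume "\<not> a \<le> x"
    then show False
      using that by (intro not_strict_mono_and_antimono_on[of x "min a y" f])
        (auto elim!: monotone_on_subset)
  qed
  have dec_ends_before_inc: "a \<le> x" if "strict_antimono_on {e<..<a} f" "strict_mono_on {x<..} f" "e \<le> x"
    for a x e
  proof (rule ccontr)
    assume "\<not> a \<le> x"
    then show False
      using that by (intro not_strict_mono_and_antimono_on[of x a f]) (auto elim!: monotone_on_subset)
  qed
  fix p assume "case p of (x1, x2) \<Rightarrow> 0 < x1 \<and> x1 < c \<and> c < x2 \<and> strict_mono_on {0<..<x1} f
    \<and> strict_antimono_on {x1<..<x2} f \<and> strict_mono_on {x2<..} f"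
  then obtain x1 x2 where p: "p = (x1, x2)" and x: "0 < x1" "x1 < c" "c < x2"
    "strict_mono_on {0<..<x1} f" "strict_antimono_on {x1<..<x2} f" "strict_mono_on {x2<..} f"
    by (cases p) auto
  have "x1 = s1"
    using inc_ends_before_dec[of s1 x1 x2] inc_ends_before_dec[of x1 s1 s2] assms x by simp
  then show "p = (s1, s2)"
    using p dec_ends_before_inc[of s1 s2 x2] dec_ends_before_inc[of x1 x2 s2] assms x by simp
qed (use assms in simp)

section \<open>The parametrization of the normalized maximizer\<close>

definition zlow :: real where
  "zlow = (1 - sqrt 5) / 2"

definition qz :: "real \<Rightarrow> real" where
  "qz z = 1 + z - z\<^sup>2"

definition var_of :: "real \<Rightarrow> real" where
  "var_of z = (1 - z) ^ 3 * (1 + z) / (qz z)\<^sup>2"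

definition mz :: "real \<Rightarrow> real" where
  "mz z = 2 * qz z / (1 + z)"

definition argmax_of :: "real \<Rightarrow> real" where
  "argmax_of z = z * mz z"

lemma zlow_bounds: "-1 < zlow" "zlow < -1/2"
proof -
  have "2 < sqrt 5" "sqrt 5 < 3"
    by (simp_all add: real_less_rsqrt real_less_lsqrt)
  then show "-1 < zlow" "zlow < -1/2"
    unfolding zlow_def by simp_all
qed

lemma qz_zlow: "qz zlow = 0"
  unfolding qz_def zlow_def by (simp add: power2_eq_square field_simps)

lemma qz_pos:
  assumes "zlow < z" "z \<le> 1"
  shows "qz z > 0"
proof -
  have "qz z = (z - zlow) * (1 - zlow - z)"
    using qz_zlow unfolding qz_def by algebra
  then show ?thesis
    using assms zlow_bounds by simp
qed

lemma param_pos: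
  assumes "zlow < z" "z < 1"
  shows "1 + z > 0" "qz z > 0" "mz z > 0" "var_of z > 0"
proof -
  show "1 + z > 0" "qz z > 0"
    using assms zlow_bounds qz_pos[of z] by simp_all
  then show "mz z > 0" "var_of z > 0"
    using assms unfolding mz_def var_of_def by simp_all
qed

lemma mz_mult_eq:
  assumes "1 + z \<noteq> 0"
  shows "mz z * (1 + z) = 2 * (1 + z - z\<^sup>2)"
  using assms unfolding mz_def qz_def by simp

lemma var_of_mult_eq:
  assumes "1 + z \<noteq> 0" "qz z \<noteq> 0"
  shows "var_of z * (mz z)\<^sup>2 * (1 + z) = 4 * (1 - z) ^ 3"
  using assms unfolding mz_def var_of_def
  by (simp add: field_simps) (simp add: power2_eq_square algebra_simps)

lemma quartic_factorization:
  fixes m z t x :: real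
  assumes "m * (1 + z) = 2 * (1 + z - z\<^sup>2)" "t * m\<^sup>2 * (1 + z) = 4 * (1 - z) ^ 3"
    and "m \<noteq> 0" "1 + z \<noteq> 0"
  shows "(1 - x / m)\<^sup>2 * ((1 - x / m)\<^sup>2 - (1 - x)) - t * x\<^sup>2 / 4
    = x * (x - z * m)\<^sup>2 * (x - (4 - m - 2 * z) * m) / m ^ 4"
  using assms by (simp add: field_simps) algebra

lemma mz_le_other_root:
  assumes "zlow < z" "z < 1"
  shows "mz z \<le> (4 - mz z - 2 * z) * mz z"
proof -
  note pos = param_pos[OF assms]
  have "mz z * (1 + z) \<le> (3 - 2 * z) * (1 + z)"
    using mz_mult_eq[of z] pos assms by (simp add: algebra_simps power2_eq_square)
  then have "1 \<le> 4 - mz z - 2 * z"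
    using pos by simp
  then show ?thesis
    using pos mult_right_mono[of 1 "4 - mz z - 2 * z" "mz z"] by simp
qed

lemma E1_sub_inverse:
  fixes t x m :: real
  assumes "t > 0" "x \<noteq> 0" "m > 0" "x < m"
  defines "P \<equiv> (1 - x + sqrt ((1 - x)\<^sup>2 + t * x\<^sup>2)) / 2" and "v \<equiv> 1 - x / m"
  shows "E1 1 1 t x - 1 / m = (v\<^sup>2 - P) / (x * (v + sqrt P))"
proof -
  have "P > 0"
    using assms(1,2) larger_quadratic_root(1)[of "t * x\<^sup>2" "1 - x"] unfolding P_def by simp
  moreover have "v > 0"
    using assms(3,4) unfolding v_def by (simp add: field_simps)
  ultimately have "v + sqrt P > 0"
    by (simp add: add_pos_pos)
  have "E1 1 1 t x - 1 / m = (v - sqrt P) / x"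
    using assms(2,3) unfolding E1_def P_def v_def by (simp add: field_simps)
  also have "\<dots> = (v - sqrt P) * (v + sqrt P) / (x * (v + sqrt P))"
    using \<open>v + sqrt P > 0\<close> by simp
  also have "(v - sqrt P) * (v + sqrt P) = v\<^sup>2 - P"
    using \<open>P > 0\<close> by (simp add: algebra_simps power2_eq_square)
  finally show ?thesis .
qed

text \<open>The gap \<open>E1 - 1 / m\<close> is \<open>(v\<^sup>2 - P) / (x * (v + sqrt P))\<close> by \<open>E1_sub_inverse\<close>,
  and the quartic factorization writes \<open>v\<^sup>2 - P\<close> as a positive multiple of
  \<open>x * (x - argmax_of z)\<^sup>2 * (x - r)\<close> with \<open>r > x\<close>: the factor \<open>x\<close> cancels.\<close>

lemma E1_gap:
  assumes z: "zlow < z" "z < 1" and x: "x \<noteq> 0" "x < mz z"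
  shows "\<exists>k>0. E1 1 1 (var_of z) x = 1 / mz z - k * (x - argmax_of z)\<^sup>2"
proof -
  define m t u where "m = mz z" and "t = var_of z" and "u = 1 - x"
  define P where "P = (u + sqrt (u\<^sup>2 + t * x\<^sup>2)) / 2"
  define v r where "v = 1 - x / m" and "r = (4 - m - 2 * z) * m"
  define B C where "B = v\<^sup>2 + P - u" and "C = v + sqrt P"
  have pos: "1 + z > 0" "qz z > 0" "m > 0" "t > 0"
    using param_pos[OF z] unfolding m_def t_def by simp_all
  then have "t * x\<^sup>2 > 0"
    using x(1) by simp
  note root = larger_quadratic_root[where u = u, OF this, folded P_def]
  have "v\<^sup>2 * (v\<^sup>2 - u) - t * x\<^sup>2 / 4 = x * (x - z * m)\<^sup>2 * (x - r) / m ^ 4"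
    using pos unfolding u_def v_def r_def m_def t_def
    by (intro quartic_factorization mz_mult_eq var_of_mult_eq) simp_all
  then have "(v\<^sup>2 - P) * B = x * (x - z * m)\<^sup>2 * (x - r) / m ^ 4"
    unfolding root(3) B_def .
  moreover have "B > 0"
    using root(2) zero_le_power2[of v] unfolding B_def by linarith
  ultimately have vP: "v\<^sup>2 - P = x * (x - z * m)\<^sup>2 * (x - r) / m ^ 4 / B"
    using pos by (simp add: eq_divide_eq ac_simps)
  have "v > 0"
    using x(2) pos unfolding v_def m_def by (simp add: field_simps)
  then have "C > 0"
    using root(1) unfolding C_def by (simp add: add_pos_pos)
  have "x < r"
    using x(2) mz_le_other_root[OF z] unfolding m_def r_def by simp
  define k where "k = (r - x) / (m ^ 4 * B * C)"
  have "k > 0"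
    unfolding k_def using \<open>x < r\<close> pos \<open>B > 0\<close> \<open>C > 0\<close> by simp
  have "E1 1 1 t x - 1 / m = (v\<^sup>2 - P) / (x * C)"
    unfolding P_def u_def v_def C_def using pos x unfolding m_def by (intro E1_sub_inverse) simp_all
  also have "\<dots> = - k * (x - argmax_of z)\<^sup>2"
    unfolding vP k_def argmax_of_def m_def[symmetric]
    using x(1) pos \<open>B > 0\<close> \<open>C > 0\<close> by (simp add: field_simps)
  finally show ?thesis
    using \<open>k > 0\<close> unfolding m_def t_def by (intro exI[of _ k]) simp
qed

lemma E1_argmax:
  assumes "zlow < z" "z < 1"
  shows "E1 1 1 (var_of z) (argmax_of z) = 1 / mz z"
proof (cases "z = 0")
  case True
  then show ?thesis
    unfolding E1_def argmax_of_def mz_def qz_def by simp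
next
  case False
  note pos = param_pos[OF assms]
  have "argmax_of z \<noteq> 0" "argmax_of z < mz z"
    using False assms pos unfolding argmax_of_def by simp_all
  then obtain k where "E1 1 1 (var_of z) (argmax_of z) = 1 / mz z - k * (argmax_of z - argmax_of z)\<^sup>2"
    using E1_gap[OF assms] by blast
  then show ?thesis
    by simp
qed

lemma E1_less_max:
  assumes z: "zlow < z" "z < 1" and x: "x \<noteq> argmax_of z"
  shows "E1 1 1 (var_of z) x < 1 / mz z"
proof -
  note pos = param_pos[OF z]
  consider "x = 0" | "mz z \<le> x" | "x \<noteq> 0" "x < mz z"
    by linarith
  then show ?thesis
  proof cases
    case 1
    then have "z \<noteq> 0"
      using x unfolding argmax_of_def by simp
    have "1 / mz z - 1 / 2 = z\<^sup>2 / (2 * qz z)"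
      using pos unfolding mz_def qz_def by (simp add: field_simps)
    also have "\<dots> > 0"
      using \<open>z \<noteq> 0\<close> pos by simp
    finally show ?thesis
      using 1 unfolding E1_def by simp
  next
    case 2
    then have "x > 0"
      using pos by simp
    define P where "P = (1 - x + sqrt ((1 - x)\<^sup>2 + var_of z * x\<^sup>2)) / 2"
    have "var_of z * x\<^sup>2 > 0"
      using \<open>x > 0\<close> pos by simp
    then have "P > 0"
      unfolding P_def by (rule larger_quadratic_root)
    have "E1 1 1 (var_of z) x = (1 - sqrt P) / x"
      using \<open>x > 0\<close> unfolding E1_def P_def by simp
    also have "\<dots> < 1 / x"
      using \<open>x > 0\<close> \<open>P > 0\<close> by (intro divide_strict_right_mono) simp_all
    also have "\<dots> \<le> 1 / mz z"
      using 2 pos by (intro divide_left_mono) simp_all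
    finally show ?thesis .
  next
    case 3
    then obtain k where "k > 0" and "E1 1 1 (var_of z) x = 1 / mz z - k * (x - argmax_of z)\<^sup>2"
      using E1_gap[OF z] by blast
    then show ?thesis
      using x by simp
  qed
qed

lemma argmax_of_less:
  assumes "zlow < z" "z < 1"
  shows "argmax_of z < 4 / var_of z"
proof (cases "z \<le> 0")
  case True
  then have "argmax_of z \<le> 0"
    using param_pos[OF assms] unfolding argmax_of_def by (simp add: mult_nonpos_nonneg)
  also have "0 < 4 / var_of z"
    using param_pos[OF assms] by simp
  finally show ?thesis .
next
  case False
  have "z * z \<le> z * 1"
    using False assms by (intro mult_left_mono) simp_all
  then have "1 \<le> qz z"
    unfolding qz_def by (simp add: power2_eq_square)
  have "(1 - z) ^ 3 \<le> 1"
    using False assms by (intro power_le_one) simp_all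
  then have "z * (1 - z) ^ 3 \<le> 1"
    using False assms by (intro mult_le_one) simp_all
  have "argmax_of z * var_of z = 2 * z * (1 - z) ^ 3 / qz z"
    using param_pos[OF assms] unfolding argmax_of_def mz_def var_of_def
    by (simp add: power2_eq_square)
  also have "\<dots> \<le> 2 * z * (1 - z) ^ 3 / 1"
    using False assms \<open>1 \<le> qz z\<close> by (intro divide_left_mono) simp_all
  also have "\<dots> < 4"
    using \<open>z * (1 - z) ^ 3 \<le> 1\<close> by simp
  finally show ?thesis
    using param_pos[OF assms] by (simp add: less_divide_eq)
qed

lemma is_max_E1_normalized_iff:
  assumes "zlow < z" "z < 1"
  shows "is_max_E1 1 1 (var_of z) a \<longleftrightarrow> a = argmax_of z"
proof
  assume "is_max_E1 1 1 (var_of z) a"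
  then have le: "E1 1 1 (var_of z) (argmax_of z) \<le> E1 1 1 (var_of z) a"
    using argmax_of_less[OF assms] unfolding is_max_E1_def by simp
  show "a = argmax_of z"
  proof (rule ccontr)
    assume "a \<noteq> argmax_of z"
    then show False
      using E1_less_max[OF assms \<open>a \<noteq> argmax_of z\<close>] E1_argmax[OF assms] le by simp
  qed
next
  assume "a = argmax_of z"
  moreover have "E1 1 1 (var_of z) a' \<le> 1 / mz z" for a'
    using E1_argmax[OF assms] E1_less_max[OF assms, of a'] by (cases "a' = argmax_of z") simp_all
  ultimately show "is_max_E1 1 1 (var_of z) a"
    using E1_argmax[OF assms] argmax_of_less[OF assms] unfolding is_max_E1_def by simp
qed

section \<open>Inverting the variance\<close>

lemma qz_deriv: "(qz has_real_derivative 1 - 2 * z) (at z)"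
  unfolding qz_def[abs_def] by (rule derivative_eq_intros refl | simp)+

lemma var_of_deriv:
  assumes "qz z \<noteq> 0"
  shows "(var_of has_real_derivative - ((1 - z)\<^sup>2 * (4 + 2 * z) / (qz z) ^ 3)) (at z)"
  unfolding var_of_def[abs_def]
proof (rule DERIV_cong[OF DERIV_divide[OF _ DERIV_power[OF qz_deriv]]])
  define A B where "A = - ((1 - z)\<^sup>2 * (2 + 4 * z))" and "B = (1 - z) ^ 3 * (1 + z)"
  show "((\<lambda>w. (1 - w) ^ 3 * (1 + w)) has_real_derivative A) (at z)"
    unfolding A_def
    by (rule derivative_eq_intros refl | simp add: algebra_simps power2_eq_square power3_eq_cube)+
  show "(qz z)\<^sup>2 \<noteq> 0"
    using assms by simp
  have "(A * (qz z)\<^sup>2 - B * (of_nat 2 * ((1 - 2 * z) * qz z ^ (2 - Suc 0)))) / ((qz z)\<^sup>2 * (qz z)\<^sup>2)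
      = (A * qz z - 2 * B * (1 - 2 * z)) / qz z ^ 3"
    using assms by (simp add: field_simps power2_eq_square power3_eq_cube)
  also have "A * qz z - 2 * B * (1 - 2 * z) = - ((1 - z)\<^sup>2 * (4 + 2 * z))"
    unfolding A_def B_def qz_def by (simp add: algebra_simps power2_eq_square power3_eq_cube)
  finally show "(A * (qz z)\<^sup>2 - B * (of_nat 2 * ((1 - 2 * z) * qz z ^ (2 - Suc 0)))) / ((qz z)\<^sup>2 * (qz z)\<^sup>2)
      = - ((1 - z)\<^sup>2 * (4 + 2 * z) / (qz z) ^ 3)"
    by simp
qed

lemma var_of_antimono: "strict_antimono_on {zlow<..<1} var_of"
proof (rule strict_antimono_on_if_deriv_neg)
  fix z assume "zlow < z" "z < 1"
  note pos = param_pos[OF this]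
  then show "(var_of has_real_derivative - ((1 - z)\<^sup>2 * (4 + 2 * z) / (qz z) ^ 3)) (at z)"
    by (intro var_of_deriv) simp
  show "- ((1 - z)\<^sup>2 * (4 + 2 * z) / (qz z) ^ 3) < 0"
    using pos \<open>z < 1\<close> by simp
qed

lemma var_of_image: "var_of ` {zlow<..<1} = {0<..}"
proof
  show "var_of ` {zlow<..<1} \<subseteq> {0<..}"
    using param_pos by auto
  show "{0<..} \<subseteq> var_of ` {zlow<..<1}"
  proof
    fix t :: real assume "t \<in> {0<..}"
    define F where "F z = t * (qz z)\<^sup>2 - (1 - z) ^ 3 * (1 + z)" for z
    have "F zlow < 0"
      unfolding F_def qz_zlow using zlow_bounds by simp
    moreover have "0 < F 1"
      unfolding F_def qz_def using \<open>t \<in> {0<..}\<close> by simp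
    moreover have "continuous_on {zlow..1} F"
      unfolding F_def qz_def by (intro continuous_intros)
    ultimately obtain z where z: "zlow < z" "z < 1" "F z = 0"
      using IVT_strict[of zlow 1 F] zlow_bounds by auto
    then have "var_of z = t"
      using param_pos[OF z(1,2)] unfolding F_def var_of_def by (simp add: field_simps)
    then show "t \<in> var_of ` {zlow<..<1}"
      using z by auto
  qed
qed

definition z_of_var :: "real \<Rightarrow> real" where
  "z_of_var = the_inv_into {zlow<..<1} var_of"

lemma var_of_inj: "inj_on var_of {zlow<..<1}"
  using var_of_antimono strict_antimono_iff_antimono by blast

lemma z_of_var_bounds:
  assumes "t > 0"
  shows "zlow < z_of_var t" "z_of_var t < 1"
proof -
  have "z_of_var t \<in> {zlow<..<1}"
    unfolding z_of_var_def using assms var_of_image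
    by (intro the_inv_into_into[OF var_of_inj _ order_refl]) simp
  then show "zlow < z_of_var t" "z_of_var t < 1"
    by simp_all
qed

lemma var_of_z_of_var: "t > 0 \<Longrightarrow> var_of (z_of_var t) = t"
  unfolding z_of_var_def using var_of_image by (intro f_the_inv_into_f[OF var_of_inj]) simp

lemma less_z_of_var_iff:
  assumes "t > 0" "zlow < y" "y < 1"
  shows "y < z_of_var t \<longleftrightarrow> t < var_of y"
  using strict_antimono_on_less_iff[OF var_of_antimono, of "z_of_var t" y]
    z_of_var_bounds[OF assms(1)] var_of_z_of_var[OF assms(1)] assms by simp

lemma z_of_var_less_iff:
  assumes "t > 0" "zlow < y" "y < 1"
  shows "z_of_var t < y \<longleftrightarrow> var_of y < t"
  using strict_antimono_on_less_iff[OF var_of_antimono, of y "z_of_var t"]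
    z_of_var_bounds[OF assms(1)] var_of_z_of_var[OF assms(1)] assms by simp

lemma z_of_var_antimono: "strict_antimono_on {0<..} z_of_var"
proof (rule monotone_onI)
  fix t t' :: real assume "t \<in> {0<..}" "t' \<in> {0<..}" "t < t'"
  then show "z_of_var t' < z_of_var t"
    using z_of_var_less_iff[of t' "z_of_var t"] z_of_var_bounds[of t] var_of_z_of_var[of t] by simp
qed

section \<open>Critical points of the maximizer\<close>

definition crit :: "real \<Rightarrow> real" where
  "crit z = 2 * z ^ 3 + 2 * z\<^sup>2 - 2 * z - 1"

lemma argmax_of_deriv:
  assumes "1 + z \<noteq> 0"
  shows "(argmax_of has_real_derivative - (2 * crit z / (1 + z)\<^sup>2)) (at z)"
proof -
  have "argmax_of = (\<lambda>w. 2 * w * qz w / (1 + w))"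
    unfolding argmax_of_def mz_def by auto
  moreover have "((\<lambda>w. 2 * w * qz w / (1 + w)) has_real_derivative - (2 * crit z / (1 + z)\<^sup>2)) (at z)"
  proof (rule DERIV_cong[OF DERIV_divide])
    show "((\<lambda>w. 2 * w * qz w) has_real_derivative 2 * qz z + 2 * z * (1 - 2 * z)) (at z)"
      by (rule derivative_eq_intros qz_deriv refl | simp)+
    show "((\<lambda>w. 1 + w) has_real_derivative 1) (at z)"
      by (rule derivative_eq_intros refl | simp)+
    have "(2 * qz z + 2 * z * (1 - 2 * z)) * (1 + z) - 2 * z * qz z * 1 = - (2 * crit z)"
      unfolding qz_def crit_def by (simp add: algebra_simps power2_eq_square power3_eq_cube)
    then show "((2 * qz z + 2 * z * (1 - 2 * z)) * (1 + z) - 2 * z * qz z * 1) / ((1 + z) * (1 + z))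
        = - (2 * crit z / (1 + z)\<^sup>2)"
      by (simp add: power2_eq_square)
  qed (use assms in simp)
  ultimately show ?thesis
    by simp
qed

definition crit_lo :: real where
  "crit_lo = (SOME r. -1/2 < r \<and> r < -2/5 \<and> crit r = 0)"

definition crit_hi :: real where
  "crit_hi = (SOME r. 4/5 < r \<and> r < 9/10 \<and> crit r = 0)"

lemma crit_lo_root: "-1/2 < crit_lo" "crit_lo < -2/5" "crit crit_lo = 0"
proof -
  have "continuous_on {-1/2..-2/5} (\<lambda>r. - crit r)"
    unfolding crit_def by (intro continuous_intros)
  then have "\<exists>r. -1/2 < r \<and> r < -2/5 \<and> - crit r = 0"
    by (intro IVT_strict) (simp_all add: crit_def power2_eq_square power3_eq_cube)
  then have "\<exists>r. -1/2 < r \<and> r < -2/5 \<and> crit r = 0"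
    by simp
  from someI_ex[OF this] show "-1/2 < crit_lo" "crit_lo < -2/5" "crit crit_lo = 0"
    unfolding crit_lo_def by simp_all
qed

lemma crit_hi_root: "4/5 < crit_hi" "crit_hi < 9/10" "crit crit_hi = 0"
proof -
  have "continuous_on {4/5..9/10} crit"
    unfolding crit_def by (intro continuous_intros)
  then have "\<exists>r. 4/5 < r \<and> r < 9/10 \<and> crit r = 0"
    by (intro IVT_strict) (simp_all add: crit_def power2_eq_square power3_eq_cube)
  from someI_ex[OF this] show "4/5 < crit_hi" "crit_hi < 9/10" "crit crit_hi = 0"
    unfolding crit_hi_def by simp_all
qed

lemma crit_factor: "crit z = (z - crit_lo) * (z - crit_hi) * (2 * z + 2 * crit_lo + 2 * crit_hi + 2)"
proof -
  have "(crit_lo - crit_hi) * (crit_lo\<^sup>2 + crit_lo * crit_hi + crit_hi\<^sup>2 + crit_lo + crit_hi - 1) = 0"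
    using crit_lo_root(3) crit_hi_root(3) unfolding crit_def by algebra
  moreover have "crit_lo \<noteq> crit_hi"
    using crit_lo_root crit_hi_root by simp
  ultimately have "crit_lo\<^sup>2 + crit_lo * crit_hi + crit_hi\<^sup>2 + crit_lo + crit_hi - 1 = 0"
    by simp
  then show ?thesis
    using crit_lo_root(3) unfolding crit_def by algebra
qed

lemma argmax_of_antimono_lo: "strict_antimono_on {zlow<..<crit_lo} argmax_of"
proof (rule strict_antimono_on_if_deriv_neg)
  fix z assume z: "zlow < z" "z < crit_lo"
  then have "1 + z > 0"
    using zlow_bounds by simp
  then show "(argmax_of has_real_derivative - (2 * crit z / (1 + z)\<^sup>2)) (at z)"
    by (intro argmax_of_deriv) simp
  have "crit z > 0"
    unfolding crit_factor using z zlow_bounds crit_lo_root crit_hi_root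
    by (intro mult_pos_pos mult_neg_neg) simp_all
  then show "- (2 * crit z / (1 + z)\<^sup>2) < 0"
    using \<open>1 + z > 0\<close> by simp
qed

lemma argmax_of_mono_mid: "strict_mono_on {crit_lo<..<crit_hi} argmax_of"
proof (rule strict_mono_on_if_deriv_pos)
  fix z assume z: "crit_lo < z" "z < crit_hi"
  then have "1 + z > 0"
    using crit_lo_root by simp
  then show "(argmax_of has_real_derivative - (2 * crit z / (1 + z)\<^sup>2)) (at z)"
    by (intro argmax_of_deriv) simp
  have "crit z < 0"
    unfolding crit_factor using z crit_lo_root crit_hi_root
    by (intro mult_neg_pos mult_pos_neg) simp_all
  then show "- (2 * crit z / (1 + z)\<^sup>2) > 0"
    using \<open>1 + z > 0\<close> by (simp add: divide_neg_pos)
qed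

lemma argmax_of_antimono_hi: "strict_antimono_on {crit_hi<..<1} argmax_of"
proof (rule strict_antimono_on_if_deriv_neg)
  fix z assume z: "crit_hi < z" "z < 1"
  then have "1 + z > 0"
    using crit_hi_root by simp
  then show "(argmax_of has_real_derivative - (2 * crit z / (1 + z)\<^sup>2)) (at z)"
    by (intro argmax_of_deriv) simp
  have "crit z > 0"
    unfolding crit_factor using z crit_lo_root crit_hi_root by (intro mult_pos_pos) simp_all
  then show "- (2 * crit z / (1 + z)\<^sup>2) < 0"
    using \<open>1 + z > 0\<close> by simp
qed

lemma var_of_thresholds: "0 < var_of crit_hi" "var_of crit_hi < 1" "1 < var_of crit_lo"
proof -
  have "var_of 0 = 1"
    unfolding var_of_def qz_def by simp
  moreover have "zlow < crit_lo" "crit_lo < 0" "0 < crit_hi" "crit_hi < 1" "zlow < 0"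
    using zlow_bounds crit_lo_root crit_hi_root by simp_all
  moreover note less_iff = strict_antimono_on_less_iff[OF var_of_antimono]
  ultimately show "0 < var_of crit_hi" "var_of crit_hi < 1" "1 < var_of crit_lo"
    using param_pos[of crit_hi] less_iff[of crit_hi 0] less_iff[of 0 crit_lo] by simp_all
qed

section \<open>Scaling\<close>

lemma E1_scale:
  assumes b: "b > 0" and d: "\<Delta> > 0"
  shows "E1 b \<Delta> s a = \<Delta> / b * E1 1 1 (s / \<Delta>\<^sup>2) (a * \<Delta> / b\<^sup>2)"
proof (cases "a = 0")
  case True
  then show ?thesis
    unfolding E1_def using b by simp
next
  case False
  define x where "x = a * \<Delta> / b\<^sup>2"
  define W where "W = (b\<^sup>2 - \<Delta> * a)\<^sup>2 + s * a\<^sup>2"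
  define Y where "Y = (b\<^sup>2 - \<Delta> * a + sqrt W) / 2"
  have x0: "x \<noteq> 0"
    unfolding x_def using False b d by simp
  have u: "1 - x = (b\<^sup>2 - \<Delta> * a) / b\<^sup>2"
    unfolding x_def using b by (simp add: field_simps)
  have w: "(1 - x)\<^sup>2 + (s / \<Delta>\<^sup>2) * x\<^sup>2 = W / (b\<^sup>2)\<^sup>2"
    unfolding u W_def x_def using b d by (simp add: field_simps power2_eq_square)
  have bb: "sqrt ((b\<^sup>2)\<^sup>2) = b\<^sup>2"
    unfolding real_sqrt_abs by simp
  have "sqrt ((1 - x)\<^sup>2 + (s / \<Delta>\<^sup>2) * x\<^sup>2) = sqrt W / b\<^sup>2"
    unfolding w real_sqrt_divide bb ..
  then have "(1 - x + sqrt ((1 - x)\<^sup>2 + (s / \<Delta>\<^sup>2) * x\<^sup>2)) / 2 = Y / b\<^sup>2"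
    unfolding u Y_def using b by (simp add: field_simps)
  then have "sqrt ((1 - x + sqrt ((1 - x)\<^sup>2 + (s / \<Delta>\<^sup>2) * x\<^sup>2)) / 2) = sqrt Y / b"
    using b by (simp add: real_sqrt_divide)
  then have "E1 1 1 (s / \<Delta>\<^sup>2) x = (1 - sqrt Y / b) / x"
    unfolding E1_def using x0 by simp
  also have "\<dots> = b / \<Delta> * ((b - sqrt Y) / a)"
    unfolding x_def using b d False by (simp add: field_simps power2_eq_square)
  also have "(b - sqrt Y) / a = E1 b \<Delta> s a"
    unfolding E1_def Y_def W_def using False by simp
  finally show ?thesis
    unfolding x_def using b d by simp
qed

lemma is_max_E1_scale:
  assumes b: "b > 0" and d: "\<Delta> > 0" and s: "s > 0"
  shows "is_max_E1 b \<Delta> s a \<longleftrightarrow> is_max_E1 1 1 (s / \<Delta>\<^sup>2) (a * \<Delta> / b\<^sup>2)"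
proof -
  define \<phi> where "\<phi> a = a * \<Delta> / b\<^sup>2" for a
  have bound: "a' < 4 * b\<^sup>2 * \<Delta> / s \<longleftrightarrow> \<phi> a' < 4 * 1\<^sup>2 * 1 / (s / \<Delta>\<^sup>2)" for a'
  proof -
    have "a' < 4 * b\<^sup>2 * \<Delta> / s \<longleftrightarrow> a' * (\<Delta> / b\<^sup>2) < 4 * b\<^sup>2 * \<Delta> / s * (\<Delta> / b\<^sup>2)"
      by (subst mult_less_cancel_right_pos) (use b d in simp_all)
    also have "4 * b\<^sup>2 * \<Delta> / s * (\<Delta> / b\<^sup>2) = 4 * 1\<^sup>2 * 1 / (s / \<Delta>\<^sup>2)"
      using b d by (simp add: field_simps power2_eq_square)
    finally show ?thesis
      unfolding \<phi>_def by simp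
  qed
  have E: "E1 b \<Delta> s a' \<le> E1 b \<Delta> s a \<longleftrightarrow> E1 1 1 (s / \<Delta>\<^sup>2) (\<phi> a') \<le> E1 1 1 (s / \<Delta>\<^sup>2) (\<phi> a)" for a'
    unfolding E1_scale[OF b d] \<phi>_def using b d by (simp add: divide_le_cancel mult_le_cancel_left_pos)
  have "x = \<phi> (x * b\<^sup>2 / \<Delta>)" for x
    unfolding \<phi>_def using b d by simp
  then show ?thesis
    unfolding is_max_E1_def \<phi>_def[symmetric] bound E by metis
qed

lemma is_max_E1_iff:
  assumes "b > 0" "\<Delta> > 0" "s > 0"
  shows "is_max_E1 b \<Delta> s a \<longleftrightarrow> a = b\<^sup>2 / \<Delta> * argmax_of (z_of_var (s / \<Delta>\<^sup>2))"
proof -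
  have "s / \<Delta>\<^sup>2 > 0"
    using assms by simp
  have "is_max_E1 b \<Delta> s a \<longleftrightarrow> a * \<Delta> / b\<^sup>2 = argmax_of (z_of_var (s / \<Delta>\<^sup>2))"
    unfolding is_max_E1_scale[OF assms]
    using is_max_E1_normalized_iff[OF z_of_var_bounds[OF \<open>s / \<Delta>\<^sup>2 > 0\<close>]]
      var_of_z_of_var[OF \<open>s / \<Delta>\<^sup>2 > 0\<close>] by simp
  also have "\<dots> \<longleftrightarrow> a = b\<^sup>2 / \<Delta> * argmax_of (z_of_var (s / \<Delta>\<^sup>2))"
    using assms by (auto simp: field_simps)
  finally show ?thesis .
qed

lemma ex1_is_max_E1:
  assumes "b > 0" "\<Delta> > 0" "s > 0"
  shows "\<exists>!a. is_max_E1 b \<Delta> s a"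
  using is_max_E1_iff[OF assms] by simp

lemma adagger_eq:
  assumes "b > 0" "\<Delta> > 0" "s > 0"
  shows "adagger b \<Delta> s = b\<^sup>2 / \<Delta> * argmax_of (z_of_var (s / \<Delta>\<^sup>2))"
  unfolding adagger_def is_max_E1_iff[OF assms] by simp

section \<open>Monotonicity and limits of the maximizer\<close>

lemma adagger_strict_mono_on:
  assumes "b > 0" "\<Delta> > 0" and Z: "strict_antimono_on Z argmax_of"
    and J: "\<And>s. s \<in> J \<Longrightarrow> s > 0 \<and> z_of_var (s / \<Delta>\<^sup>2) \<in> Z"
  shows "strict_mono_on J (adagger b \<Delta>)"
proof (rule monotone_onI)
  fix s s' assume s: "s \<in> J" "s' \<in> J" "s < s'"
  then have "z_of_var (s' / \<Delta>\<^sup>2) < z_of_var (s / \<Delta>\<^sup>2)"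
    using J assms(2) by (intro monotone_onD[OF z_of_var_antimono]) (simp_all add: divide_strict_right_mono)
  then have "argmax_of (z_of_var (s / \<Delta>\<^sup>2)) < argmax_of (z_of_var (s' / \<Delta>\<^sup>2))"
    using J s by (intro monotone_onD[OF Z]) simp_all
  then show "adagger b \<Delta> s < adagger b \<Delta> s'"
    using J s assms(1,2) by (simp add: adagger_eq divide_strict_right_mono)
qed

lemma adagger_strict_antimono_on:
  assumes "b > 0" "\<Delta> > 0" and Z: "strict_mono_on Z argmax_of"
    and J: "\<And>s. s \<in> J \<Longrightarrow> s > 0 \<and> z_of_var (s / \<Delta>\<^sup>2) \<in> Z"
  shows "strict_antimono_on J (adagger b \<Delta>)"
proof (rule monotone_onI)
  fix s s' assume s: "s \<in> J" "s' \<in> J" "s < s'"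
  then have "z_of_var (s' / \<Delta>\<^sup>2) < z_of_var (s / \<Delta>\<^sup>2)"
    using J assms(2) by (intro monotone_onD[OF z_of_var_antimono]) (simp_all add: divide_strict_right_mono)
  then have "argmax_of (z_of_var (s' / \<Delta>\<^sup>2)) < argmax_of (z_of_var (s / \<Delta>\<^sup>2))"
    using J s by (intro monotone_onD[OF Z]) simp_all
  then show "adagger b \<Delta> s' < adagger b \<Delta> s"
    using J s assms(1,2) by (simp add: adagger_eq divide_strict_right_mono)
qed

lemma adagger_monotone_pieces:
  assumes "b > 0" "\<Delta> > 0"
  shows "strict_mono_on {0<..<\<Delta>\<^sup>2 * var_of crit_hi} (adagger b \<Delta>)"
    and "strict_antimono_on {\<Delta>\<^sup>2 * var_of crit_hi<..<\<Delta>\<^sup>2 * var_of crit_lo} (adagger b \<Delta>)"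
    and "strict_mono_on {\<Delta>\<^sup>2 * var_of crit_lo<..} (adagger b \<Delta>)"
proof -
  have lo: "zlow < crit_lo" "crit_lo < 1" and hi: "zlow < crit_hi" "crit_hi < 1"
    using zlow_bounds crit_lo_root crit_hi_root by simp_all
  have scaled: "s / \<Delta>\<^sup>2 < c \<longleftrightarrow> s < \<Delta>\<^sup>2 * c" "c < s / \<Delta>\<^sup>2 \<longleftrightarrow> \<Delta>\<^sup>2 * c < s" for s c
    using assms by (simp_all add: field_simps)
  show "strict_mono_on {0<..<\<Delta>\<^sup>2 * var_of crit_hi} (adagger b \<Delta>)"
  proof (rule adagger_strict_mono_on[OF assms argmax_of_antimono_hi])
    fix s assume "s \<in> {0<..<\<Delta>\<^sup>2 * var_of crit_hi}"
    then show "s > 0 \<and> z_of_var (s / \<Delta>\<^sup>2) \<in> {crit_hi<..<1}"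
      using less_z_of_var_iff[OF _ hi, of "s / \<Delta>\<^sup>2"] z_of_var_bounds(2)[of "s / \<Delta>\<^sup>2"] scaled assms by simp
  qed
  show "strict_antimono_on {\<Delta>\<^sup>2 * var_of crit_hi<..<\<Delta>\<^sup>2 * var_of crit_lo} (adagger b \<Delta>)"
  proof (rule adagger_strict_antimono_on[OF assms argmax_of_mono_mid])
    fix s assume s: "s \<in> {\<Delta>\<^sup>2 * var_of crit_hi<..<\<Delta>\<^sup>2 * var_of crit_lo}"
    moreover have "0 < \<Delta>\<^sup>2 * var_of crit_hi"
      using assms var_of_thresholds by simp
    ultimately have "s > 0"
      by simp
    then show "s > 0 \<and> z_of_var (s / \<Delta>\<^sup>2) \<in> {crit_lo<..<crit_hi}"
      using s less_z_of_var_iff[OF _ lo, of "s / \<Delta>\<^sup>2"] z_of_var_less_iff[OF _ hi, of "s / \<Delta>\<^sup>2"]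
        scaled assms by simp
  qed
  show "strict_mono_on {\<Delta>\<^sup>2 * var_of crit_lo<..} (adagger b \<Delta>)"
  proof (rule adagger_strict_mono_on[OF assms argmax_of_antimono_lo])
    fix s assume s: "s \<in> {\<Delta>\<^sup>2 * var_of crit_lo<..}"
    moreover have "0 < \<Delta>\<^sup>2 * var_of crit_lo"
      using assms var_of_thresholds by simp
    ultimately have "s > 0"
      by simp
    then show "s > 0 \<and> z_of_var (s / \<Delta>\<^sup>2) \<in> {zlow<..<crit_lo}"
      using s z_of_var_less_iff[OF _ lo, of "s / \<Delta>\<^sup>2"] z_of_var_bounds(1)[of "s / \<Delta>\<^sup>2"] scaled assms by simp
  qed
qed

lemma z_of_var_tendsto_0: "(z_of_var \<longlongrightarrow> 1) (at_right 0)"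
proof (rule order_tendstoI)
  fix y :: real assume "y < 1"
  define y' where "y' = max y 0"
  have y': "zlow < y'" "y' < 1" "y \<le> y'"
    unfolding y'_def using \<open>y < 1\<close> zlow_bounds by auto
  have "\<forall>\<^sub>F t in at_right 0. t \<in> {0<..<var_of y'}"
    using param_pos(4)[OF y'(1,2)] by (rule eventually_at_right_real)
  then show "\<forall>\<^sub>F t in at_right 0. y < z_of_var t"
    by (rule eventually_mono) (use less_z_of_var_iff[OF _ y'(1,2)] y'(3) in force)
next
  fix y :: real assume "1 < y"
  have "\<forall>\<^sub>F t in at_right 0. t \<in> {0<..<1::real}"
    by (rule eventually_at_right_real) simp
  then show "\<forall>\<^sub>F t in at_right 0. z_of_var t < y"
    by (rule eventually_mono) (use z_of_var_bounds(2) \<open>1 < y\<close> in force)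
qed

lemma z_of_var_tendsto_top: "(z_of_var \<longlongrightarrow> zlow) at_top"
proof (rule order_tendstoI)
  fix y :: real assume "y < zlow"
  show "\<forall>\<^sub>F t in at_top. y < z_of_var t"
    using eventually_gt_at_top[of 0]
    by (rule eventually_mono) (use z_of_var_bounds(1) \<open>y < zlow\<close> in force)
next
  fix y :: real assume "zlow < y"
  define y' where "y' = min y 0"
  have y': "zlow < y'" "y' < 1" "y' \<le> y"
    unfolding y'_def using \<open>zlow < y\<close> zlow_bounds by auto
  show "\<forall>\<^sub>F t in at_top. z_of_var t < y"
    using eventually_gt_at_top[of "max 0 (var_of y')"]
    by (rule eventually_mono) (use z_of_var_less_iff[OF _ y'(1,2)] y'(3) in force)
qed

lemma argmax_of_isCont: "zlow \<le> z \<Longrightarrow> isCont argmax_of z"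
  using argmax_of_deriv[of z] zlow_bounds by (intro DERIV_isCont) force

lemma adagger_tendsto_0:
  assumes "b > 0" "\<Delta> > 0"
  shows "(adagger b \<Delta> \<longlongrightarrow> b\<^sup>2 / \<Delta>) (at_right 0)"
proof -
  have "((\<lambda>s. s / \<Delta>\<^sup>2) \<longlongrightarrow> 0) (at_right 0)"
    by (rule tendsto_eq_intros refl)+ (use assms in simp_all)
  moreover have "\<forall>\<^sub>F s in at_right 0. s / \<Delta>\<^sup>2 > 0"
    using eventually_at_right_less[of 0] by (rule eventually_mono) (use assms in simp)
  ultimately have "filterlim (\<lambda>s. s / \<Delta>\<^sup>2) (at_right 0) (at_right 0)"
    by (rule tendsto_imp_filterlim_at_right)
  then have "((\<lambda>s. argmax_of (z_of_var (s / \<Delta>\<^sup>2))) \<longlongrightarrow> argmax_of 1) (at_right 0)"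
    using zlow_bounds by (intro isCont_tendsto_compose[OF argmax_of_isCont]
      filterlim_compose[OF z_of_var_tendsto_0]) simp_all
  moreover have "argmax_of 1 = 1"
    unfolding argmax_of_def mz_def qz_def by simp
  ultimately have "((\<lambda>s. b\<^sup>2 / \<Delta> * argmax_of (z_of_var (s / \<Delta>\<^sup>2))) \<longlongrightarrow> b\<^sup>2 / \<Delta>) (at_right 0)"
    using tendsto_mult_left[of _ 1 _ "b\<^sup>2 / \<Delta>"] by simp
  moreover have "\<forall>\<^sub>F s in at_right 0. b\<^sup>2 / \<Delta> * argmax_of (z_of_var (s / \<Delta>\<^sup>2)) = adagger b \<Delta> s"
    using eventually_at_right_less[of 0] by (rule eventually_mono) (simp add: adagger_eq assms)
  ultimately show ?thesis
    by (rule tendsto_cong[THEN iffD1, rotated])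
qed

lemma adagger_tendsto_top:
  assumes "b > 0" "\<Delta> > 0"
  shows "filterlim (adagger b \<Delta>) (at_left 0) at_top"
proof -
  have "filterlim (\<lambda>s. 1 / \<Delta>\<^sup>2 * s) at_top at_top"
    using assms by (intro filterlim_tendsto_pos_mult_at_top[OF tendsto_const _ filterlim_ident]) simp
  then have "((\<lambda>s. argmax_of (z_of_var (s / \<Delta>\<^sup>2))) \<longlongrightarrow> argmax_of zlow) at_top"
    by (intro isCont_tendsto_compose[OF argmax_of_isCont] filterlim_compose[OF z_of_var_tendsto_top]) simp_all
  moreover have "argmax_of zlow = 0"
    unfolding argmax_of_def mz_def qz_zlow by simp
  ultimately have "((\<lambda>s. b\<^sup>2 / \<Delta> * argmax_of (z_of_var (s / \<Delta>\<^sup>2))) \<longlongrightarrow> 0) at_top"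
    using tendsto_mult_left[of _ 0 _ "b\<^sup>2 / \<Delta>"] by simp
  moreover have "\<forall>\<^sub>F s in at_top. b\<^sup>2 / \<Delta> * argmax_of (z_of_var (s / \<Delta>\<^sup>2)) = adagger b \<Delta> s"
    using eventually_gt_at_top[of 0] by (rule eventually_mono) (simp add: adagger_eq assms)
  ultimately have "(adagger b \<Delta> \<longlongrightarrow> 0) at_top"
    by (rule tendsto_cong[THEN iffD1, rotated])
  moreover have "\<forall>\<^sub>F s in at_top. adagger b \<Delta> s < 0"
    using eventually_gt_at_top[of "\<Delta>\<^sup>2"]
  proof (rule eventually_mono)
    fix s assume "\<Delta>\<^sup>2 < s"
    moreover have "0 < \<Delta>\<^sup>2"
      using assms by simp
    ultimately have "s > 0"
      by linarith
    have "var_of 0 < s / \<Delta>\<^sup>2"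
      using \<open>\<Delta>\<^sup>2 < s\<close> assms unfolding var_of_def qz_def by (simp add: field_simps)
    then have "z_of_var (s / \<Delta>\<^sup>2) < 0"
      using z_of_var_less_iff[of "s / \<Delta>\<^sup>2" 0] zlow_bounds \<open>s > 0\<close> assms by simp
    moreover have "mz (z_of_var (s / \<Delta>\<^sup>2)) > 0"
      using param_pos(3) z_of_var_bounds \<open>s > 0\<close> assms by simp
    ultimately have "argmax_of (z_of_var (s / \<Delta>\<^sup>2)) < 0"
      unfolding argmax_of_def by (rule mult_neg_pos)
    then show "adagger b \<Delta> s < 0"
      using assms unfolding adagger_eq[OF assms \<open>s > 0\<close>] by (intro mult_pos_neg) simp_all
  qed
  ultimately show ?thesis
    by (rule tendsto_imp_filterlim_at_left)
qed

theorem theorem7: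
  fixes b \<Delta> :: real
  assumes "b > 0" and "\<Delta> > 0"
  shows "(\<forall>s>0. \<exists>!a. is_max_E1 b \<Delta> s a)
    \<and> (\<exists>!(s1, s2). 0 < s1 \<and> s1 < \<Delta>\<^sup>2 \<and> \<Delta>\<^sup>2 < s2
          \<and> strict_mono_on {0<..<s1} (adagger b \<Delta>)
          \<and> strict_antimono_on {s1<..<s2} (adagger b \<Delta>)
          \<and> strict_mono_on {s2<..} (adagger b \<Delta>))
    \<and> (adagger b \<Delta> \<longlongrightarrow> b\<^sup>2 / \<Delta>) (at_right 0)
    \<and> filterlim (adagger b \<Delta>) (at_left 0) at_top"
proof -
  have "0 < \<Delta>\<^sup>2 * var_of crit_hi" "\<Delta>\<^sup>2 * var_of crit_hi < \<Delta>\<^sup>2" "\<Delta>\<^sup>2 < \<Delta>\<^sup>2 * var_of crit_lo"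
    using var_of_thresholds assms by simp_all
  note turning_points = ex1_turning_points[OF this adagger_monotone_pieces[OF assms]]
  show ?thesis
    by (intro conjI allI impI turning_points ex1_is_max_E1[OF assms]
        adagger_tendsto_0[OF assms] adagger_tendsto_top[OF assms])
qed

end
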